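(* Let $C$ be a ternary linear $[n,k,d]$ code with $\dim(C\cap C^{\perp_E})=s$. For any $i\in\{1,\ldots,n\}$, if $C_i$ denotes the shortened code of $C$ on the $i$-th coordinate, then $\dim(C_i\cap C_i^{\perp_E})\le s+1$.
   Context: A ternary $[n,k,d]$ code is a $k$-dimensional subspace of $\mathbb{F}_3^n$ with minimum nonzero Hamming weight $d$. $C^{\perp_E}$ is the dual with respect to $\langle x,y\rangle_E=\sum x_iy_i$. The shortened code $C_i$ is obtained by taking the codewords of $C$ whose $i$-th coordinate is $0$ and deleting that coordinate. *)

theory Defs
  imports Complex_Main "HOL-Library.Function_Algebras"
begin

text \<open>Words of length n over a field 'a are modelled as functions nat => 'a
  vanishing outside the coordinates {0..<n} (coordinates are 0-based).\<close>

definition fscale :: "'a::field \<Rightarrow> (nat \<Rightarrow> 'a) \<Rightarrow> (nat \<Rightarrow> 'a)" where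
  "fscale c v = (\<lambda>j. c * v j)"

definition words :: "nat \<Rightarrow> (nat \<Rightarrow> 'a::zero) set" where
  "words n = {v. \<forall>j\<ge>n. v j = 0}"

definition is_linear_code :: "nat \<Rightarrow> (nat \<Rightarrow> 'a::field) set \<Rightarrow> bool" where
  "is_linear_code n C \<longleftrightarrow> C \<subseteq> words n \<and> Modules.module.subspace fscale C"

definition code_dim :: "(nat \<Rightarrow> 'a::field) set \<Rightarrow> nat" where
  "code_dim C = Vector_Spaces.vector_space.dim fscale C"

definition hamming_wt :: "nat \<Rightarrow> (nat \<Rightarrow> 'a::zero) \<Rightarrow> nat" where
  "hamming_wt n v = card {j. j < n \<and> v j \<noteq> 0}"

text \<open>Minimum nonzero Hamming weight (Inf of the empty set is 0 for nat).\<close>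
definition min_wt :: "nat \<Rightarrow> (nat \<Rightarrow> 'a::zero) set \<Rightarrow> nat" where
  "min_wt n C = Inf {hamming_wt n v | v. v \<in> C \<and> v \<noteq> 0}"

definition euclid_ip :: "nat \<Rightarrow> (nat \<Rightarrow> 'a::comm_ring) \<Rightarrow> (nat \<Rightarrow> 'a) \<Rightarrow> 'a" where
  "euclid_ip n x y = (\<Sum>j<n. x j * y j)"

definition euclid_dual :: "nat \<Rightarrow> (nat \<Rightarrow> 'a::comm_ring) set \<Rightarrow> (nat \<Rightarrow> 'a) set" where
  "euclid_dual n C = {y \<in> words n. \<forall>x\<in>C. euclid_ip n x y = 0}"

definition delete_coord :: "nat \<Rightarrow> (nat \<Rightarrow> 'a) \<Rightarrow> (nat \<Rightarrow> 'a)" where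
  "delete_coord i v = (\<lambda>j. if j < i then v j else v (Suc j))"

definition shortened :: "nat \<Rightarrow> (nat \<Rightarrow> 'a::zero) set \<Rightarrow> (nat \<Rightarrow> 'a) set" where
  "shortened i C = delete_coord i ` {v \<in> C. v i = 0}"

end

theory Submission imports Defs begin

text \<open>Shortening at a coordinate \<open>i\<close> is, up to deleting that coordinate (an isometry for the
  Euclidean form on words vanishing at \<open>i\<close>), passing to the subcode \<open>D\<close> of codewords vanishing
  at \<open>i\<close>, so the hull of the shortened code has the dimension of \<open>D \<inter> D\<^sup>\<bottom>\<close>. If \<open>c \<in> C\<close> has
  \<open>c\<^sub>i \<noteq> 0\<close>, then \<open>C = D + span {c}\<close>, hence the vectors of \<open>D \<inter> D\<^sup>\<bottom>\<close> orthogonal to \<open>c\<close> lie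
  in the hull \<open>C \<inter> C\<^sup>\<bottom>\<close>. Being the kernel of a linear functional on \<open>D \<inter> D\<^sup>\<bottom>\<close>, this space has
  codimension at most one there.\<close>

context vector_space begin

lemma finite_basis_exists:
  assumes "V \<subseteq> span W" "finite W"
  obtains B where "B \<subseteq> V" "independent B" "V \<subseteq> span B" "card B = dim V" "finite B"
proof -
  obtain B where B: "B \<subseteq> V" "independent B" "V \<subseteq> span B" "card B = dim V"
    using basis_exists by blast
  have "finite B"
    using independent_span_bound[OF assms(2) B(2)] B(1) assms(1) by blast
  with B that show ?thesis by blast
qed

lemma dim_subset_of_finite_span:
  assumes "U \<subseteq> V" "V \<subseteq> span W" "finite W"
  shows "dim U \<le> dim V"
proof -
  obtain B where "V \<subseteq> span B" "card B = dim V" "finite B"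
    using finite_basis_exists[OF assms(2,3)] by blast
  with assms(1) dim_le_card[of U B] show ?thesis by auto
qed

lemma dim_le_Suc_dim_kernel:
  assumes "subspace V" "V \<subseteq> span W" "finite W"
    and "additive f" "\<And>c x. f (c *s x) = c * f x"
  shows "dim V \<le> dim {v \<in> V. f v = 0} + 1"
proof (cases "\<exists>u\<in>V. f u \<noteq> 0")
  case False
  then have "{v \<in> V. f v = 0} = V" by auto
  then show ?thesis by simp
next
  case True
  then obtain u where u: "u \<in> V" "f u \<noteq> 0" by blast
  have kernel_span: "{v \<in> V. f v = 0} \<subseteq> span W"
    using assms(2) by blast
  obtain B where B: "{v \<in> V. f v = 0} \<subseteq> span B" "card B = dim {v \<in> V. f v = 0}" "finite B"
    using finite_basis_exists[OF kernel_span assms(3)] by blast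
  have "V \<subseteq> span (insert u B)"
  proof
    fix v assume v: "v \<in> V"
    define t where "t = f v / f u"
    have "v - t *s u \<in> {v \<in> V. f v = 0}"
      using v u assms(1,5) additive.diff[OF assms(4)]
      by (simp add: subspace_diff subspace_scale t_def)
    then have "v - t *s u \<in> span (insert u B)"
      using B(1) span_mono[of B "insert u B"] by blast
    moreover have "t *s u \<in> span (insert u B)"
      by (simp add: span_base span_scale)
    ultimately have "(v - t *s u) + t *s u \<in> span (insert u B)"
      by (rule span_add)
    then show "v \<in> span (insert u B)" by simp
  qed
  then have "dim V \<le> card (insert u B)"
    using dim_le_card B(3) by blast
  also have "\<dots> \<le> card B + 1"
    using B(3) by (simp add: card_insert_if)
  finally show ?thesis using B(2) by simp
qed

end

lemma (in Vector_Spaces.linear) dim_image_le_of_finite_span: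
  assumes "V \<subseteq> vs1.span W" "finite W"
  shows "vs2.dim (f ` V) \<le> vs1.dim V"
proof -
  obtain B where B: "V \<subseteq> vs1.span B" "card B = vs1.dim V" "finite B"
    using vs1.finite_basis_exists[OF assms] by blast
  have "vs2.dim (f ` V) \<le> card (f ` B)"
    using B(3) by (intro vs2.dim_le_card spans_image B(1)) simp
  also have "\<dots> \<le> card B"
    using B(3) card_image_le by blast
  finally show ?thesis using B(2) by simp
qed

interpretation fs: vector_space "fscale :: 'a::field \<Rightarrow> (nat \<Rightarrow> 'a) \<Rightarrow> (nat \<Rightarrow> 'a)"
  by unfold_locales (auto simp: fscale_def fun_eq_iff algebra_simps)

lemma fscale_apply [simp]: "fscale c v j = c * v j"
  by (simp add: fscale_def)

definition unit_word :: "nat \<Rightarrow> nat \<Rightarrow> 'a::field" where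
  "unit_word j = (\<lambda>k. if k = j then 1 else 0)"

lemma words_subset_span_unit_words:
  "words n \<subseteq> fs.span (unit_word ` {..<n} :: (nat \<Rightarrow> 'a::field) set)"
proof
  fix v :: "nat \<Rightarrow> 'a" assume v: "v \<in> words n"
  have "v = (\<Sum>j<n. fscale (v j) (unit_word j))"
  proof
    fix k
    have "(\<Sum>j<n. fscale (v j) (unit_word j)) k = (\<Sum>j<n. v j * unit_word j k)"
      by (induction n) auto
    also have "\<dots> = v k"
      using v by (auto simp: unit_word_def words_def sum.delta' if_distrib cong: if_cong)
    finally show "v k = (\<Sum>j<n. fscale (v j) (unit_word j)) k" by simp
  qed
  also have "\<dots> \<in> fs.span (unit_word ` {..<n})"
    by (intro fs.span_sum fs.span_scale fs.span_base) auto
  finally show "v \<in> fs.span (unit_word ` {..<n})" .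
qed

lemma dim_subset_words:
  assumes "U \<subseteq> V" "V \<subseteq> words n"
  shows "fs.dim U \<le> fs.dim (V :: (nat \<Rightarrow> 'a::field) set)"
  using assms words_subset_span_unit_words by (blast intro: fs.dim_subset_of_finite_span)

lemma euclid_ip_add_right: "euclid_ip n x (y + z) = euclid_ip n x y + euclid_ip n x z"
  by (simp add: euclid_ip_def algebra_simps sum.distrib)

lemma euclid_ip_fscale_right: "euclid_ip n x (fscale c y) = c * euclid_ip n x y"
  by (simp add: euclid_ip_def sum_distrib_left algebra_simps)

lemma euclid_ip_commute: "euclid_ip n x y = euclid_ip n y x"
  by (simp add: euclid_ip_def mult.commute)

lemma additive_euclid_ip: "additive (euclid_ip n x)"
  by unfold_locales (rule euclid_ip_add_right)

lemma euclid_ip_delete_coord: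
  assumes "i < n" "x i = 0"
  shows "euclid_ip (n - 1) (delete_coord i x) (delete_coord i y) = euclid_ip n x y"
proof -
  define g where "g j = (if j < i then j else Suc j)" for j
  have "bij_betw g {..<n - 1} ({..<n} - {i})"
  proof (rule bij_betw_imageI)
    show "inj_on g {..<n - 1}"
      unfolding inj_on_def g_def by auto
    show "g ` {..<n - 1} = {..<n} - {i}"
    proof
      show "g ` {..<n - 1} \<subseteq> {..<n} - {i}"
        using assms unfolding g_def by auto
      show "{..<n} - {i} \<subseteq> g ` {..<n - 1}"
      proof
        fix j assume j: "j \<in> {..<n} - {i}"
        then have "j = g (if j < i then j else j - 1)"
          unfolding g_def by auto
        moreover have "(if j < i then j else j - 1) \<in> {..<n - 1}"
          using j assms by auto
        ultimately show "j \<in> g ` {..<n - 1}" by blast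
      qed
    qed
  qed
  have "euclid_ip n x y = (\<Sum>j\<in>{..<n} - {i}. x j * y j)"
    unfolding euclid_ip_def using assms by (intro sum.mono_neutral_right) auto
  also have "\<dots> = (\<Sum>j<n - 1. x (g j) * y (g j))"
    using sum.reindex_bij_betw[OF \<open>bij_betw g _ _\<close>, of "\<lambda>j. x j * y j"] by simp
  also have "\<dots> = euclid_ip (n - 1) (delete_coord i x) (delete_coord i y)"
    unfolding euclid_ip_def delete_coord_def g_def by (intro sum.cong) auto
  finally show ?thesis by simp
qed

lemma delete_coord_words: "v \<in> words n \<Longrightarrow> i < n \<Longrightarrow> delete_coord i v \<in> words (n - 1)"
  by (simp add: words_def delete_coord_def)

lemma linear_delete_coord:
  "Vector_Spaces.linear fscale fscale (delete_coord i :: (nat \<Rightarrow> 'a::field) \<Rightarrow> _)"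
  unfolding Vector_Spaces.linear_iff by (auto simp: delete_coord_def fun_eq_iff fs.vector_space_axioms)

lemma subspace_euclid_dual: "fs.subspace (euclid_dual n C)"
  unfolding fs.subspace_def euclid_dual_def words_def
  by (auto simp: euclid_ip_add_right euclid_ip_fscale_right) (simp add: euclid_ip_def)

definition coord_zero_subcode :: "nat \<Rightarrow> (nat \<Rightarrow> 'a::zero) set \<Rightarrow> (nat \<Rightarrow> 'a) set" where
  "coord_zero_subcode i C = {v \<in> C. v i = 0}"

lemma subspace_coord_zero_subcode: "fs.subspace C \<Longrightarrow> fs.subspace (coord_zero_subcode i C)"
  unfolding fs.subspace_def coord_zero_subcode_def by auto

definition euclid_hull :: "nat \<Rightarrow> (nat \<Rightarrow> 'a::comm_ring) set \<Rightarrow> (nat \<Rightarrow> 'a) set" where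
  "euclid_hull n C = C \<inter> euclid_dual n C"

lemma subspace_euclid_hull: "fs.subspace C \<Longrightarrow> fs.subspace (euclid_hull n C)"
  unfolding euclid_hull_def by (intro fs.subspace_inter subspace_euclid_dual)

lemma euclid_hull_shortened:
  assumes "C \<subseteq> words n" "i < n"
  shows "euclid_hull (n - 1) (shortened i C)
    = delete_coord i ` euclid_hull n (coord_zero_subcode i C)"
    (is "?H = delete_coord i ` ?K")
proof -
  have ip: "euclid_ip (n - 1) (delete_coord i x) (delete_coord i v) = euclid_ip n x v"
    if "x \<in> coord_zero_subcode i C" for x v :: "nat \<Rightarrow> 'a"
    using that assms(2) euclid_ip_delete_coord by (auto simp: coord_zero_subcode_def)
  have "v \<in> ?K \<longleftrightarrow> delete_coord i v \<in> ?H" if v: "v \<in> coord_zero_subcode i C" for v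
    using v assms ip delete_coord_words
    by (auto simp: euclid_hull_def euclid_dual_def shortened_def coord_zero_subcode_def)
  moreover have "?K \<subseteq> coord_zero_subcode i C"
    by (auto simp: euclid_hull_def)
  moreover have "?H \<subseteq> delete_coord i ` coord_zero_subcode i C"
    by (auto simp: euclid_hull_def shortened_def coord_zero_subcode_def)
  ultimately show ?thesis by blast
qed

text \<open>Every \<open>x \<in> C\<close> is \<open>y + t c\<close> with \<open>y\<close> vanishing at \<open>i\<close>, where \<open>t = x\<^sub>i / c\<^sub>i\<close>; when no
  codeword is nonzero at \<open>i\<close>, \<open>c = 0\<close> serves.\<close>
lemma euclid_hull_coord_zero_subcode_orth_subset:
  assumes "fs.subspace C" "c \<in> C" "\<forall>x\<in>C. x i \<noteq> 0 \<longrightarrow> c i \<noteq> 0"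
  shows "{v \<in> euclid_hull n (coord_zero_subcode i C). euclid_ip n c v = 0} \<subseteq> euclid_hull n C"
proof
  fix v assume v: "v \<in> {v \<in> euclid_hull n (coord_zero_subcode i C). euclid_ip n c v = 0}"
  have "euclid_ip n v x = 0" if x: "x \<in> C" for x
  proof -
    define t where "t = x i / c i"
    define y where "y = x + fscale (- t) c"
    have "y \<in> C"
      unfolding y_def using x assms(1,2) by (intro fs.subspace_add fs.subspace_scale)
    moreover have "y i = 0"
      using x assms(3) by (auto simp: y_def t_def)
    ultimately have "y \<in> coord_zero_subcode i C"
      by (simp add: coord_zero_subcode_def)
    then have "euclid_ip n y v = 0"
      using v by (auto simp: euclid_hull_def euclid_dual_def)
    moreover have "x = y + fscale t c"
      by (simp add: y_def fun_eq_iff)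
    ultimately show ?thesis
      using v by (simp add: euclid_ip_add_right euclid_ip_fscale_right euclid_ip_commute[of n v])
  qed
  then show "v \<in> euclid_hull n C"
    using v by (auto simp: euclid_hull_def euclid_dual_def coord_zero_subcode_def euclid_ip_commute)
qed

lemma dim_euclid_hull_coord_zero_subcode_le:
  assumes "C \<subseteq> words n" "fs.subspace C"
  shows "fs.dim (euclid_hull n (coord_zero_subcode i C)) \<le> fs.dim (euclid_hull n C) + 1"
proof -
  obtain c where c: "c \<in> C" "\<forall>x\<in>C. x i \<noteq> 0 \<longrightarrow> c i \<noteq> 0"
    using fs.subspace_0[OF assms(2)] by blast
  let ?K = "euclid_hull n (coord_zero_subcode i C)"
  have K_words: "?K \<subseteq> words n"
    using assms(1) by (auto simp: euclid_hull_def coord_zero_subcode_def)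
  have "fs.dim ?K \<le> fs.dim {v \<in> ?K. euclid_ip n c v = 0} + 1"
    using K_words words_subset_span_unit_words
    by (intro fs.dim_le_Suc_dim_kernel subspace_euclid_hull subspace_coord_zero_subcode assms(2)
        additive_euclid_ip euclid_ip_fscale_right) auto
  also have "\<dots> \<le> fs.dim (euclid_hull n C) + 1"
    using assms(1)
    by (intro add_right_mono dim_subset_words[OF euclid_hull_coord_zero_subcode_orth_subset[OF assms(2) c]])
      (auto simp: euclid_hull_def)
  finally show ?thesis .
qed

theorem proposition5p3:
  fixes C :: "(nat \<Rightarrow> 'a::field) set" and n k d s i :: nat
  assumes "card (UNIV :: 'a set) = 3"
    and "is_linear_code n C"
    and "k = code_dim C"
    and "d = min_wt n C"
    and "code_dim (C \<inter> euclid_dual n C) = s"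
    and "i < n"
  shows "code_dim (shortened i C \<inter> euclid_dual (n - 1) (shortened i C)) \<le> s + 1"
proof -
  have C: "C \<subseteq> words n" "fs.subspace C"
    using assms(2) by (auto simp: is_linear_code_def)
  interpret delete: Vector_Spaces.linear fscale fscale "delete_coord i :: (nat \<Rightarrow> 'a) \<Rightarrow> _"
    by (rule linear_delete_coord)
  have "code_dim (euclid_hull (n - 1) (shortened i C))
      \<le> fs.dim (euclid_hull n (coord_zero_subcode i C))"
    unfolding code_dim_def euclid_hull_shortened[OF C(1) assms(6)]
    using C(1) words_subset_span_unit_words
    by (intro delete.dim_image_le_of_finite_span)
      (auto simp: euclid_hull_def coord_zero_subcode_def)
  also have "\<dots> \<le> fs.dim (euclid_hull n C) + 1"
    using dim_euclid_hull_coord_zero_subcode_le[OF C] .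
  finally show ?thesis
    using assms(5) by (simp add: code_dim_def euclid_hull_def)
qed

end
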